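(* Let $\widehat P$ be any transition kernel on finite $\mathcal S\times\mathcal A$, $r:\mathcal S\times\mathcal A\to[0,1]$, $n\ge2$ an integer, $s_0\in\mathcal S$, $\underline{\widehat P}=(1-\frac1n)\widehat P+\frac1n\mathbf 1e_{s_0}^\top$, and $\underline{\widehat{\mathcal T}}(h)(s)=\max_a\big(r(s,a)+\sum_{s'}\underline{\widehat P}(s'|s,a)h(s')\big)$. Suppose a policy $\pi$ satisfies one of: (i) $\pi$ is greedy with respect to $r+\underline{\widehat P}h$ for some $h$ with $\|\underline{\widehat h}^\star-h\|_{\mathrm{sp}}\le\frac1{n^2}$; (ii) $\underline{\widehat{\mathcal T}}(\underline{\widehat h}^\pi)\le\underline{\widehat h}^\pi+\underline{\widehat\rho}^\pi+\frac1{n^2}\mathbf 1$; (iii) $\underline{\widehat\rho}^\pi\ge\underline{\widehat\rho}^\star-\frac1{3n^2}\mathbf 1$ and $\|\underline{\widehat h}^\pi-\underline{\widehat h}^\star\|_\infty\le\frac1{3n^2}$. Then $\|\widehat V^\star_{1-\frac1n}-\widehat V^\pi_{1-\frac1n}\|_\infty\le\frac1n$. Furthermore, whenever $\|\widehat V^\star_{1-\frac1n}-\widehat V^\pi_{1-\frac1n}\|_\infty\le\frac1n$ holds, one has $\underline{\widehat\rho}^\pi\ge\underline{\widehat\rho}^\star-\frac1{n^2}\mathbf 1$ and $\|\underline{\widehat h}^\pi-\underline{\widehat h}^\star\|_{\mathrm{sp}}\le\frac2n$.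
   Context: $\underline{\widehat P}(s'|s,a)=(1-\frac1n)\widehat P(s'|s,a)+\frac1n\mathbb 1\{s'=s_0\}$. Policies stationary Markov, possibly randomized; a policy is greedy with respect to $x\in\mathbb R^{\mathcal S\times\mathcal A}$ if $\sum_a\pi(a|s)x(s,a)=\max_ax(s,a)$ for all $s$. $\widehat V^\pi_\gamma=(I-\gamma\widehat P_\pi)^{-1}r_\pi$, $\widehat V^\star_\gamma=\max_\pi\widehat V^\pi_\gamma$. $\underline{\widehat\rho}^\pi,\underline{\widehat h}^\pi$ are the gain $Q^\infty_\pi r_\pi$ and bias $\mathrm{C\text{-}lim}_T\sum_{t<T}(Q^t_\pi r_\pi-Q^\infty_\pi r_\pi)$ of $\pi$ with $Q=\underline{\widehat P}$ ($Q^\infty_\pi$ the Cesàro limit of $Q_\pi^t$); $\underline{\widehat\rho}^\star,\underline{\widehat h}^\star$ those of a Blackwell-optimal policy of $(\underline{\widehat P},r)$. $\|x\|_{\mathrm{sp}}=\max x-\min x$; inequalities elementwise. *)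

theory Defs
  imports "HOL-Analysis.Analysis"
begin

text \<open>Finite MDP with state type 's and action type 'a (both finite).
  Kernel P s a s' = P(s'|s,a); reward r s a; policy \<pi> s a = \<pi>(a|s).\<close>

definition is_kernel :: "('s::finite \<Rightarrow> 'a::finite \<Rightarrow> 's \<Rightarrow> real) \<Rightarrow> bool" where
  "is_kernel P \<longleftrightarrow> (\<forall>s a s'. 0 \<le> P s a s') \<and> (\<forall>s a. (\<Sum>s'\<in>UNIV. P s a s') = 1)"

definition is_policy :: "('s::finite \<Rightarrow> 'a::finite \<Rightarrow> real) \<Rightarrow> bool" where
  "is_policy \<pi> \<longleftrightarrow> (\<forall>s a. 0 \<le> \<pi> s a) \<and> (\<forall>s. (\<Sum>a\<in>UNIV. \<pi> s a) = 1)"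

definition anchored :: "nat \<Rightarrow> 's \<Rightarrow> ('s \<Rightarrow> 'a \<Rightarrow> 's \<Rightarrow> real) \<Rightarrow> ('s \<Rightarrow> 'a \<Rightarrow> 's \<Rightarrow> real)" where
  "anchored n s0 P = (\<lambda>s a s'. (1 - 1 / real n) * P s a s' + (1 / real n) * (if s' = s0 then 1 else 0))"

definition pol_mat :: "('s::finite \<Rightarrow> 'a::finite \<Rightarrow> 's \<Rightarrow> real) \<Rightarrow> ('s \<Rightarrow> 'a \<Rightarrow> real) \<Rightarrow> real^'s^'s" where
  "pol_mat P \<pi> = (\<chi> s s'. \<Sum>a\<in>UNIV. \<pi> s a * P s a s')"

definition pol_rew :: "('s::finite \<Rightarrow> 'a::finite \<Rightarrow> real) \<Rightarrow> ('s \<Rightarrow> 'a \<Rightarrow> real) \<Rightarrow> real^'s" where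
  "pol_rew r \<pi> = (\<chi> s. \<Sum>a\<in>UNIV. \<pi> s a * r s a)"

fun mpow :: "real^'n^'n \<Rightarrow> nat \<Rightarrow> real^'n^'n" where
  "mpow M 0 = mat 1"
| "mpow M (Suc t) = M ** mpow M t"

definition disc_value :: "('s::finite \<Rightarrow> 'a::finite \<Rightarrow> 's \<Rightarrow> real) \<Rightarrow> ('s \<Rightarrow> 'a \<Rightarrow> real) \<Rightarrow> real \<Rightarrow> ('s \<Rightarrow> 'a \<Rightarrow> real) \<Rightarrow> real^'s" where
  "disc_value P r \<gamma> \<pi> = matrix_inv (mat 1 - \<gamma> *\<^sub>R pol_mat P \<pi>) *v pol_rew r \<pi>"

definition opt_disc_value :: "('s::finite \<Rightarrow> 'a::finite \<Rightarrow> 's \<Rightarrow> real) \<Rightarrow> ('s \<Rightarrow> 'a \<Rightarrow> real) \<Rightarrow> real \<Rightarrow> real^'s" where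
  "opt_disc_value P r \<gamma> = (\<chi> s. SUP \<pi>\<in>{\<pi>. is_policy \<pi>}. disc_value P r \<gamma> \<pi> $ s)"

definition cesaro_lim :: "(nat \<Rightarrow> 'v::real_normed_vector) \<Rightarrow> 'v" where
  "cesaro_lim x = lim (\<lambda>N. (1 / real N) *\<^sub>R (\<Sum>T<N. x T))"

definition gain :: "('s::finite \<Rightarrow> 'a::finite \<Rightarrow> 's \<Rightarrow> real) \<Rightarrow> ('s \<Rightarrow> 'a \<Rightarrow> real) \<Rightarrow> ('s \<Rightarrow> 'a \<Rightarrow> real) \<Rightarrow> real^'s" where
  "gain P r \<pi> = cesaro_lim (\<lambda>t. mpow (pol_mat P \<pi>) t) *v pol_rew r \<pi>"

definition bias :: "('s::finite \<Rightarrow> 'a::finite \<Rightarrow> 's \<Rightarrow> real) \<Rightarrow> ('s \<Rightarrow> 'a \<Rightarrow> real) \<Rightarrow> ('s \<Rightarrow> 'a \<Rightarrow> real) \<Rightarrow> real^'s" where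
  "bias P r \<pi> = cesaro_lim (\<lambda>T. \<Sum>t<T. mpow (pol_mat P \<pi>) t *v pol_rew r \<pi> - gain P r \<pi>)"

definition blackwell_optimal :: "('s::finite \<Rightarrow> 'a::finite \<Rightarrow> 's \<Rightarrow> real) \<Rightarrow> ('s \<Rightarrow> 'a \<Rightarrow> real) \<Rightarrow> ('s \<Rightarrow> 'a \<Rightarrow> real) \<Rightarrow> bool" where
  "blackwell_optimal P r \<pi> \<longleftrightarrow> is_policy \<pi> \<and>
     (\<exists>\<gamma>0<1. \<forall>\<gamma>. \<gamma>0 < \<gamma> \<and> \<gamma> < 1 \<longrightarrow>
        (\<forall>\<pi>'. is_policy \<pi>' \<longrightarrow> (\<forall>s. disc_value P r \<gamma> \<pi>' $ s \<le> disc_value P r \<gamma> \<pi> $ s)))"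

definition opt_gain :: "('s::finite \<Rightarrow> 'a::finite \<Rightarrow> 's \<Rightarrow> real) \<Rightarrow> ('s \<Rightarrow> 'a \<Rightarrow> real) \<Rightarrow> real^'s" where
  "opt_gain P r = gain P r (SOME \<pi>. blackwell_optimal P r \<pi>)"

definition opt_bias :: "('s::finite \<Rightarrow> 'a::finite \<Rightarrow> 's \<Rightarrow> real) \<Rightarrow> ('s \<Rightarrow> 'a \<Rightarrow> real) \<Rightarrow> real^'s" where
  "opt_bias P r = bias P r (SOME \<pi>. blackwell_optimal P r \<pi>)"

definition bellman :: "('s::finite \<Rightarrow> 'a::finite \<Rightarrow> 's \<Rightarrow> real) \<Rightarrow> ('s \<Rightarrow> 'a \<Rightarrow> real) \<Rightarrow> real^'s \<Rightarrow> real^'s" where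
  "bellman P r h = (\<chi> s. Max (range (\<lambda>a. r s a + (\<Sum>s'\<in>UNIV. P s a s' * h $ s'))))"

definition greedy :: "('s::finite \<Rightarrow> 'a::finite \<Rightarrow> real) \<Rightarrow> ('s \<Rightarrow> 'a \<Rightarrow> real) \<Rightarrow> bool" where
  "greedy \<pi> x \<longleftrightarrow> (\<forall>s. (\<Sum>a\<in>UNIV. \<pi> s a * x s a) = Max (range (x s)))"

definition sp_norm :: "real^'s::finite \<Rightarrow> real" where
  "sp_norm v = Max (range (\<lambda>s. v $ s)) - Min (range (\<lambda>s. v $ s))"

definition sup_norm :: "real^'s::finite \<Rightarrow> real" where
  "sup_norm v = Max (range (\<lambda>s. \<bar>v $ s\<bar>))"

end

(*
  The anchored kernel Q = (1 - 1/n) P + (1/n) 1 e_s0^T contracts the span of any vector by the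
  factor gamma = 1 - 1/n under every policy, so the powers of Q_pi converge. If V_pi is the
  gamma-discounted value of pi under P, then r_pi = V_pi - Q_pi V_pi + (V_pi(s0)/n) 1, hence
  the gain of pi under Q is the constant V_pi(s0)/n and its bias is V_pi up to a constant.
  Restarting at s0 also turns b-discounting under Q into (b gamma)-discounting under P, up to a
  multiple of the value at s0. Discounted values are rational in the discount factor, so among
  the finitely many deterministic policies the optimal one is eventually constant below gamma
  (Blackwell); consequently a Blackwell-optimal policy of Q is gamma-optimal for P, and its gain
  and bias are V*(s0)/n and V* up to a constant. Each of (i)-(iii) is then an approximate
  Bellman inequality for V_pi or V*, and the amplification 1/(1 - gamma) = n yields the bound 1/n;
  the converse is read off directly from these identities.
*)

theory Submission
  imports Defs "HOL-Computational_Algebra.Polynomial"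
begin

section \<open>Averages under kernels and policies\<close>

lemma weighted_mean_le:
  fixes w X :: "'i::finite \<Rightarrow> real"
  assumes "\<And>i. 0 \<le> w i" "sum w UNIV = 1" "\<And>i. X i \<le> m"
  shows "(\<Sum>i\<in>UNIV. w i * X i) \<le> m"
proof -
  have "(\<Sum>i\<in>UNIV. w i * X i) \<le> (\<Sum>i\<in>UNIV. w i * m)"
    using assms by (intro sum_mono mult_left_mono) auto
  also have "\<dots> = m"
    using assms by (simp flip: sum_distrib_right)
  finally show ?thesis .
qed

lemma weighted_mean_ge:
  fixes w X :: "'i::finite \<Rightarrow> real"
  assumes "\<And>i. 0 \<le> w i" "sum w UNIV = 1" "\<And>i. m \<le> X i"
  shows "m \<le> (\<Sum>i\<in>UNIV. w i * X i)"
  using weighted_mean_le[of w "\<lambda>i. - X i" "- m"] assms by (simp add: sum_negf)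

lemma policy_mean_le: "is_policy \<pi> \<Longrightarrow> (\<And>a. X a \<le> m) \<Longrightarrow> (\<Sum>a\<in>UNIV. \<pi> s a * X a) \<le> m"
  by (rule weighted_mean_le) (auto simp: is_policy_def)

lemma policy_mean_ge: "is_policy \<pi> \<Longrightarrow> (\<And>a. m \<le> X a) \<Longrightarrow> m \<le> (\<Sum>a\<in>UNIV. \<pi> s a * X a)"
  by (rule weighted_mean_ge) (auto simp: is_policy_def)

lemma kernel_mean_le: "is_kernel P \<Longrightarrow> (\<And>s'. u$s' \<le> m) \<Longrightarrow> (\<Sum>s'\<in>UNIV. P s a s' * u$s') \<le> m"
  by (rule weighted_mean_le) (auto simp: is_kernel_def)

lemma kernel_mean_ge: "is_kernel P \<Longrightarrow> (\<And>s'. m \<le> u$s') \<Longrightarrow> m \<le> (\<Sum>s'\<in>UNIV. P s a s' * u$s')"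
  by (rule weighted_mean_ge) (auto simp: is_kernel_def)

lemma kernel_mean_minus_const:
  "is_kernel P \<Longrightarrow> (\<Sum>s'\<in>UNIV. P s a s' * (w - (\<chi> s. c))$s') = (\<Sum>s'\<in>UNIV. P s a s' * w$s') - c"
  by (simp add: is_kernel_def right_diff_distrib sum_subtractf flip: sum_distrib_right)

lemma pol_mat_mult_nth:
  "(pol_mat P \<pi> *v u) $ s = (\<Sum>a\<in>UNIV. \<pi> s a * (\<Sum>s'\<in>UNIV. P s a s' * u$s'))"
proof -
  have "(pol_mat P \<pi> *v u) $ s = (\<Sum>s'\<in>UNIV. \<Sum>a\<in>UNIV. \<pi> s a * P s a s' * u$s')"
    by (simp add: pol_mat_def matrix_vector_mult_def sum_distrib_right)
  also have "\<dots> = (\<Sum>a\<in>UNIV. \<pi> s a * (\<Sum>s'\<in>UNIV. P s a s' * u$s'))"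
    by (subst sum.swap) (simp add: sum_distrib_left mult.assoc)
  finally show ?thesis .
qed

lemma pol_mat_mult_le:
  "is_kernel P \<Longrightarrow> is_policy \<pi> \<Longrightarrow> (\<And>s'. u$s' \<le> m) \<Longrightarrow> (pol_mat P \<pi> *v u) $ s \<le> m"
  unfolding pol_mat_mult_nth by (intro policy_mean_le kernel_mean_le)

lemma pol_mat_mult_ge:
  "is_kernel P \<Longrightarrow> is_policy \<pi> \<Longrightarrow> (\<And>s'. m \<le> u$s') \<Longrightarrow> m \<le> (pol_mat P \<pi> *v u) $ s"
  unfolding pol_mat_mult_nth by (intro policy_mean_ge kernel_mean_ge)

lemma pol_mat_mult_const:
  assumes "is_kernel P" "is_policy \<pi>"
  shows "pol_mat P \<pi> *v (\<chi> s. c) = (\<chi> s. c)"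
proof -
  have "(pol_mat P \<pi> *v (\<chi> s. c)) $ s = c" for s
    using pol_mat_mult_le[OF assms, of "\<chi> s. c" c s] pol_mat_mult_ge[OF assms, of c "\<chi> s. c" s] by simp
  thus ?thesis
    by (simp add: vec_eq_iff)
qed

definition vmax :: "real^'n::finite \<Rightarrow> real" where
  "vmax v = Max (range (\<lambda>s. v$s))"

definition vmin :: "real^'n::finite \<Rightarrow> real" where
  "vmin v = Min (range (\<lambda>s. v$s))"

lemma vmax_ge: "v$s \<le> vmax v"
  unfolding vmax_def by (rule Max_ge) auto

lemma vmin_le: "vmin v \<le> v$s"
  unfolding vmin_def by (rule Min_le) auto

lemma vmax_le: "(\<And>s. v$s \<le> c) \<Longrightarrow> vmax v \<le> c"
  unfolding vmax_def by (subst Max_le_iff) auto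

lemma vmin_ge: "(\<And>s. c \<le> v$s) \<Longrightarrow> c \<le> vmin v"
  unfolding vmin_def by (subst Min_ge_iff) auto

lemma vmax_attained: "\<exists>s. v$s = vmax v"
proof -
  have "vmax v \<in> range (\<lambda>s. v$s)"
    unfolding vmax_def by (intro Max_in) auto
  thus ?thesis
    by auto
qed

lemma vmin_attained: "\<exists>s. v$s = vmin v"
proof -
  have "vmin v \<in> range (\<lambda>s. v$s)"
    unfolding vmin_def by (intro Min_in) auto
  thus ?thesis
    by auto
qed

lemma sp_norm_eq_vmax_minus_vmin: "sp_norm v = vmax v - vmin v"
  unfolding sp_norm_def vmax_def vmin_def ..

lemma sp_norm_le: "(\<And>s t. v$s - v$t \<le> c) \<Longrightarrow> sp_norm v \<le> c"
  unfolding sp_norm_eq_vmax_minus_vmin by (metis vmax_attained vmin_attained)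

lemma diff_le_sp_norm: "v$s - v$t \<le> sp_norm v"
  unfolding sp_norm_eq_vmax_minus_vmin using vmax_ge[of v s] vmin_le[of v t] by simp

lemma sup_norm_le: "(\<And>s. \<bar>v$s\<bar> \<le> c) \<Longrightarrow> sup_norm v \<le> c"
  unfolding sup_norm_def by (subst Max_le_iff) auto

lemma abs_le_sup_norm: "\<bar>v$s\<bar> \<le> sup_norm v"
  unfolding sup_norm_def by (rule Max_ge) auto

section \<open>Discounted values\<close>

lemma pol_subsolution_le:
  assumes "is_kernel P" "is_policy \<pi>" "0 \<le> \<gamma>" "\<gamma> < 1"
    and sub: "\<And>s. u$s \<le> \<gamma> * (pol_mat P \<pi> *v u) $ s + c"
  shows "u$s \<le> c / (1 - \<gamma>)"
proof -
  obtain s1 where s1: "u$s1 = vmax u"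
    using vmax_attained by blast
  have "(pol_mat P \<pi> *v u) $ s1 \<le> vmax u"
    using assms(1,2) by (rule pol_mat_mult_le) (rule vmax_ge)
  hence "\<gamma> * (pol_mat P \<pi> *v u) $ s1 \<le> \<gamma> * vmax u"
    using \<open>0 \<le> \<gamma>\<close> by (rule mult_left_mono)
  hence "vmax u * (1 - \<gamma>) \<le> c"
    using sub[of s1] s1 by (simp add: right_diff_distrib mult.commute)
  hence "vmax u \<le> c / (1 - \<gamma>)"
    using \<open>\<gamma> < 1\<close> by (simp add: pos_le_divide_eq)
  thus ?thesis
    using vmax_ge[of u s] by linarith
qed

lemma mat_1_minus_scaleR_mult_nth: "((mat 1 - \<gamma> *\<^sub>R M) *v v) $ s = v$s - \<gamma> * (M *v v)$s"
  by (simp add: matrix_vector_mult_diff_rdistrib flip: scaleR_matrix_vector_assoc)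

lemma invertible_mat_1_minus_pol_mat:
  assumes K: "is_kernel P" and pol: "is_policy \<pi>" and \<gamma>: "0 \<le> \<gamma>" "\<gamma> < 1"
  shows "invertible (mat 1 - \<gamma> *\<^sub>R pol_mat P \<pi>)"
  unfolding invertible_left_inverse matrix_left_invertible_ker
proof (intro allI impI)
  fix x
  assume x0: "(mat 1 - \<gamma> *\<^sub>R pol_mat P \<pi>) *v x = 0"
  hence "(mat 1 - \<gamma> *\<^sub>R pol_mat P \<pi>) *v (-x) = 0"
    by (simp add: linear_neg[OF matrix_vector_mul_linear])
  hence x: "x$s = \<gamma> * (pol_mat P \<pi> *v x) $ s" and neg_x: "(-x)$s = \<gamma> * (pol_mat P \<pi> *v (-x)) $ s" for s
    using x0 by (metis eq_iff_diff_eq_0 mat_1_minus_scaleR_mult_nth zero_index)+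
  have le_0: "u$s \<le> 0" if "\<And>s. u$s = \<gamma> * (pol_mat P \<pi> *v u) $ s" for u s
  proof -
    have "u$t \<le> \<gamma> * (pol_mat P \<pi> *v u) $ t + 0" for t
      using that[of t] by linarith
    from pol_subsolution_le[OF K pol \<gamma> this] show ?thesis
      by simp
  qed
  have "x$s \<le> 0" "(-x)$s \<le> 0" for s
    using le_0[of x, OF x] le_0[of "-x", OF neg_x] by simp_all
  thus "x = 0"
    by (auto simp: vec_eq_iff intro: antisym)
qed

definition qvalue :: "('s::finite \<Rightarrow> 'a::finite \<Rightarrow> 's \<Rightarrow> real) \<Rightarrow> ('s \<Rightarrow> 'a \<Rightarrow> real) \<Rightarrow> real \<Rightarrow> real^'s \<Rightarrow> 's \<Rightarrow> 'a \<Rightarrow> real" where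
  "qvalue P r \<gamma> v s a = r s a + \<gamma> * (\<Sum>s'\<in>UNIV. P s a s' * v$s')"

definition pol_bellman :: "('s::finite \<Rightarrow> 'a::finite \<Rightarrow> 's \<Rightarrow> real) \<Rightarrow> ('s \<Rightarrow> 'a \<Rightarrow> real) \<Rightarrow> real \<Rightarrow> ('s \<Rightarrow> 'a \<Rightarrow> real) \<Rightarrow> real^'s \<Rightarrow> real^'s" where
  "pol_bellman P r \<gamma> \<pi> v = pol_rew r \<pi> + \<gamma> *\<^sub>R (pol_mat P \<pi> *v v)"

lemma pol_bellman_nth: "pol_bellman P r \<gamma> \<pi> v $ s = (\<Sum>a\<in>UNIV. \<pi> s a * qvalue P r \<gamma> v s a)"
  by (simp add: pol_bellman_def pol_mat_mult_nth pol_rew_def qvalue_def sum_distrib_left sum.distrib algebra_simps)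

lemma pol_bellman_diff: "pol_bellman P r \<gamma> \<pi> v - pol_bellman P r \<gamma> \<pi> w = \<gamma> *\<^sub>R (pol_mat P \<pi> *v (v - w))"
  by (simp add: pol_bellman_def matrix_vector_mult_diff_distrib scaleR_diff_right)

lemma qvalue_diff: "qvalue P r \<gamma> v s a - qvalue P r \<gamma> w s a = \<gamma> * (\<Sum>s'\<in>UNIV. P s a s' * (v - w)$s')"
  by (simp add: qvalue_def sum_subtractf right_diff_distrib)

lemma disc_value_linear_eq:
  assumes "is_kernel P" "is_policy \<pi>" "0 \<le> \<gamma>" "\<gamma> < 1"
  shows "(mat 1 - \<gamma> *\<^sub>R pol_mat P \<pi>) *v disc_value P r \<gamma> \<pi> = pol_rew r \<pi>"
proof -
  let ?A = "mat 1 - \<gamma> *\<^sub>R pol_mat P \<pi>"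
  have "?A ** matrix_inv ?A = mat 1"
    using invertible_mat_1_minus_pol_mat[OF assms] unfolding invertible_def matrix_inv_def
    by (rule someI2_ex) blast
  thus ?thesis
    by (simp add: disc_value_def matrix_vector_mul_assoc)
qed

lemma disc_value_fixpoint:
  assumes "is_kernel P" "is_policy \<pi>" "0 \<le> \<gamma>" "\<gamma> < 1"
  shows "pol_bellman P r \<gamma> \<pi> (disc_value P r \<gamma> \<pi>) = disc_value P r \<gamma> \<pi>"
proof -
  have "(mat 1 - \<gamma> *\<^sub>R pol_mat P \<pi>) *v v = v - \<gamma> *\<^sub>R (pol_mat P \<pi> *v v)" for v
    by (simp add: vec_eq_iff mat_1_minus_scaleR_mult_nth)
  hence "pol_rew r \<pi> = disc_value P r \<gamma> \<pi> - \<gamma> *\<^sub>R (pol_mat P \<pi> *v disc_value P r \<gamma> \<pi>)"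
    using disc_value_linear_eq[OF assms, of r] by simp
  thus ?thesis
    unfolding pol_bellman_def by simp
qed

lemma disc_value_ge_of_subsolution:
  assumes K: "is_kernel P" and pol: "is_policy \<pi>" and \<gamma>: "0 \<le> \<gamma>" "\<gamma> < 1"
    and sub: "\<And>s. w$s \<le> pol_bellman P r \<gamma> \<pi> w $ s + c"
  shows "w$s - disc_value P r \<gamma> \<pi> $ s \<le> c / (1 - \<gamma>)"
proof -
  let ?V = "disc_value P r \<gamma> \<pi>"
  have "(w - ?V)$t \<le> \<gamma> * (pol_mat P \<pi> *v (w - ?V)) $ t + c" for t
  proof -
    have "(pol_bellman P r \<gamma> \<pi> w - pol_bellman P r \<gamma> \<pi> ?V) $ t = \<gamma> * (pol_mat P \<pi> *v (w - ?V)) $ t"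
      by (simp only: pol_bellman_diff vector_scaleR_component real_scaleR_def)
    moreover have "pol_bellman P r \<gamma> \<pi> ?V $ t = ?V $ t"
      by (simp only: disc_value_fixpoint[OF K pol \<gamma>])
    ultimately show ?thesis
      using sub[of t] unfolding vector_minus_component by linarith
  qed
  from pol_subsolution_le[OF K pol \<gamma> this] show ?thesis
    by simp
qed

lemma disc_value_le_of_supersolution:
  assumes K: "is_kernel P" and pol: "is_policy \<pi>" and \<gamma>: "0 \<le> \<gamma>" "\<gamma> < 1"
    and super: "\<And>s. pol_bellman P r \<gamma> \<pi> w $ s \<le> w$s + c"
  shows "disc_value P r \<gamma> \<pi> $ s - w$s \<le> c / (1 - \<gamma>)"
proof -
  let ?V = "disc_value P r \<gamma> \<pi>"
  have "(?V - w)$t \<le> \<gamma> * (pol_mat P \<pi> *v (?V - w)) $ t + c" for t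
  proof -
    have "(pol_bellman P r \<gamma> \<pi> ?V - pol_bellman P r \<gamma> \<pi> w) $ t = \<gamma> * (pol_mat P \<pi> *v (?V - w)) $ t"
      by (simp only: pol_bellman_diff vector_scaleR_component real_scaleR_def)
    moreover have "pol_bellman P r \<gamma> \<pi> ?V $ t = ?V $ t"
      by (simp only: disc_value_fixpoint[OF K pol \<gamma>])
    ultimately show ?thesis
      using super[of t] unfolding vector_minus_component by linarith
  qed
  from pol_subsolution_le[OF K pol \<gamma> this] show ?thesis
    by simp
qed

lemma disc_value_unique:
  assumes "is_kernel P" "is_policy \<pi>" "0 \<le> \<gamma>" "\<gamma> < 1"
    and fixed: "pol_bellman P r \<gamma> \<pi> v = v"
  shows "disc_value P r \<gamma> \<pi> = v"
proof -
  have "v$s - disc_value P r \<gamma> \<pi> $ s \<le> 0" "disc_value P r \<gamma> \<pi> $ s - v$s \<le> 0" for s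
    using disc_value_ge_of_subsolution[OF assms(1-4), of v r 0]
      disc_value_le_of_supersolution[OF assms(1-4), of r v 0] fixed by simp_all
  thus ?thesis
    by (auto simp: vec_eq_iff intro: antisym)
qed

section \<open>Optimal deterministic policies\<close>

definition det_policy :: "('s \<Rightarrow> 'a) \<Rightarrow> 's \<Rightarrow> 'a \<Rightarrow> real" where
  "det_policy f s a = (if a = f s then 1 else 0)"

lemma is_policy_det_policy: "is_policy (det_policy (f :: 's::finite \<Rightarrow> 'a::finite))"
  unfolding is_policy_def det_policy_def by simp

lemma sum_det_policy [simp]:
  fixes f :: "'s \<Rightarrow> 'a::finite"
  shows "(\<Sum>a\<in>UNIV. det_policy f s a * X a) = (X (f s) :: real)"
proof -
  have "(\<Sum>a\<in>UNIV. det_policy f s a * X a) = (\<Sum>a\<in>UNIV. if a = f s then X a else 0)"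
    by (rule sum.cong) (auto simp: det_policy_def)
  thus ?thesis
    by simp
qed

lemma pol_bellman_det_policy_nth:
  "pol_bellman P r \<gamma> (det_policy f) v $ s = qvalue P r \<gamma> v s (f s)"
  by (simp add: pol_bellman_nth)

lemma disc_value_det_policy_nth:
  assumes "is_kernel P" "0 \<le> \<gamma>" "\<gamma> < 1"
  shows "disc_value P r \<gamma> (det_policy f) $ s = qvalue P r \<gamma> (disc_value P r \<gamma> (det_policy f)) s (f s)"
  using disc_value_fixpoint[OF assms(1) is_policy_det_policy assms(2,3)]
  by (metis pol_bellman_det_policy_nth)

lemma disc_value_le_of_qvalue_le:
  assumes "is_kernel P" "is_policy \<pi>" "0 \<le> \<gamma>" "\<gamma> < 1"
    and "\<And>s a. qvalue P r \<gamma> w s a \<le> w$s"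
  shows "disc_value P r \<gamma> \<pi> $ s \<le> w$s"
proof -
  have "pol_bellman P r \<gamma> \<pi> w $ t \<le> w$t + 0" for t
    unfolding pol_bellman_nth using assms(2,5) by (simp add: policy_mean_le)
  from disc_value_le_of_supersolution[OF assms(1-4) this] show ?thesis
    by simp
qed

lemma det_policy_improvement:
  assumes K: "is_kernel P" and \<gamma>: "0 \<le> \<gamma>" "\<gamma> < 1"
    and improving: "disc_value P r \<gamma> (det_policy f) $ s < qvalue P r \<gamma> (disc_value P r \<gamma> (det_policy f)) s a"
  defines "g \<equiv> f(s := a)"
  shows "\<And>t. disc_value P r \<gamma> (det_policy f) $ t \<le> disc_value P r \<gamma> (det_policy g) $ t"
    and "disc_value P r \<gamma> (det_policy f) $ s < disc_value P r \<gamma> (det_policy g) $ s"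
proof -
  let ?Vf = "disc_value P r \<gamma> (det_policy f)" and ?Vg = "disc_value P r \<gamma> (det_policy g)"
  have sub: "?Vf $ t \<le> pol_bellman P r \<gamma> (det_policy g) ?Vf $ t + 0" for t
    using improving disc_value_det_policy_nth[OF K \<gamma>, of r f t]
    by (cases "t = s") (simp_all add: pol_bellman_det_policy_nth g_def)
  show le: "?Vf $ t \<le> ?Vg $ t" for t
    using disc_value_ge_of_subsolution[OF K is_policy_det_policy \<gamma> sub, of t] by simp
  have "?Vg $ s - ?Vf $ s = \<gamma> * (\<Sum>s'\<in>UNIV. P s a s' * (?Vg - ?Vf) $ s') + (qvalue P r \<gamma> ?Vf s a - ?Vf $ s)"
    using disc_value_det_policy_nth[OF K \<gamma>, of r g s] qvalue_diff[of P r \<gamma> ?Vg s a ?Vf]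
    by (simp add: g_def)
  moreover have "0 \<le> (\<Sum>s'\<in>UNIV. P s a s' * (?Vg - ?Vf) $ s')"
    using le by (intro kernel_mean_ge[OF K]) simp
  ultimately show "?Vf $ s < ?Vg $ s"
    using improving \<gamma> by (smt (verit) mult_nonneg_nonneg)
qed

text \<open>A deterministic policy maximising \<open>\<Sum>\<^sub>s V(s)\<close> admits no improving action, hence dominates all policies.\<close>

lemma ex_optimal_det_policy:
  fixes P :: "'s::finite \<Rightarrow> 'a::finite \<Rightarrow> 's \<Rightarrow> real"
  assumes K: "is_kernel P" and \<gamma>: "0 \<le> \<gamma>" "\<gamma> < 1"
  obtains f where "\<And>\<pi> s. is_policy \<pi> \<Longrightarrow> disc_value P r \<gamma> \<pi> $ s \<le> disc_value P r \<gamma> (det_policy f) $ s"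
proof -
  define total where "total g = (\<Sum>s\<in>UNIV. disc_value P r \<gamma> (det_policy g) $ s)" for g
  have "Max (range total) \<in> range total"
    by (intro Max_in) auto
  then obtain f where f: "Max (range total) = total f"
    by blast
  have f_max: "total g \<le> total f" for g
    unfolding f[symmetric] by (rule Max_ge) auto
  have greedy: "qvalue P r \<gamma> (disc_value P r \<gamma> (det_policy f)) s a \<le> disc_value P r \<gamma> (det_policy f) $ s" for s a
  proof (rule ccontr)
    assume "\<not> ?thesis"
    hence improving: "disc_value P r \<gamma> (det_policy f) $ s < qvalue P r \<gamma> (disc_value P r \<gamma> (det_policy f)) s a"
      by simp
    have "total f < total (f(s := a))"
      unfolding total_def using det_policy_improvement[OF K \<gamma> improving]
      by (intro sum_strict_mono_ex1) auto
    with f_max show False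
      by (simp add: not_le[symmetric])
  qed
  show ?thesis
    by (rule that) (rule disc_value_le_of_qvalue_le[OF K _ \<gamma> greedy])
qed

lemma opt_disc_value_eqI:
  assumes "is_policy \<pi>\<^sub>0" and "\<And>\<pi> s. is_policy \<pi> \<Longrightarrow> disc_value P r \<gamma> \<pi> $ s \<le> disc_value P r \<gamma> \<pi>\<^sub>0 $ s"
  shows "opt_disc_value P r \<gamma> = disc_value P r \<gamma> \<pi>\<^sub>0"
  unfolding opt_disc_value_def vec_eq_iff using assms by (auto intro!: cSup_eq_maximum)

lemma opt_disc_value_det_policy:
  assumes K: "is_kernel P" and \<gamma>: "0 \<le> \<gamma>" "\<gamma> < 1"
  obtains f where "opt_disc_value P r \<gamma> = disc_value P r \<gamma> (det_policy f)"
proof -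
  obtain f where "\<And>\<pi> s. is_policy \<pi> \<Longrightarrow> disc_value P r \<gamma> \<pi> $ s \<le> disc_value P r \<gamma> (det_policy f) $ s"
    by (rule ex_optimal_det_policy[OF K \<gamma>]) (rule that)
  thus ?thesis
    by (intro that opt_disc_value_eqI[OF is_policy_det_policy])
qed

lemma disc_value_le_opt_disc_value:
  assumes K: "is_kernel P" and pol: "is_policy \<pi>" and \<gamma>: "0 \<le> \<gamma>" "\<gamma> < 1"
  shows "disc_value P r \<gamma> \<pi> $ s \<le> opt_disc_value P r \<gamma> $ s"
proof -
  obtain f where dom: "\<And>\<pi> s. is_policy \<pi> \<Longrightarrow> disc_value P r \<gamma> \<pi> $ s \<le> disc_value P r \<gamma> (det_policy f) $ s"
    by (rule ex_optimal_det_policy[OF K \<gamma>]) (rule that)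
  hence "opt_disc_value P r \<gamma> = disc_value P r \<gamma> (det_policy f)"
    by (rule opt_disc_value_eqI[OF is_policy_det_policy])
  thus ?thesis
    using dom[OF pol] by simp
qed

section \<open>Dependence on the discount factor\<close>

lemma det_poly_entries:
  fixes p :: "'n::finite \<Rightarrow> 'n \<Rightarrow> real poly"
  obtains q where "\<And>x. det (\<chi> i j. poly (p i j) x) = poly q x"
proof
  show "det (\<chi> i j. poly (p i j) x)
      = poly (\<Sum>\<sigma>\<in>{\<sigma>. \<sigma> permutes UNIV}. of_int (sign \<sigma>) * (\<Prod>i\<in>UNIV. p i (\<sigma> i))) x" for x
    by (simp add: det_def poly_sum poly_prod)
qed

text \<open>Cramer's rule, with denominator \<open>D(d) = det (I - d P\<^sub>\<pi>)\<close>.\<close>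

lemma disc_value_rational:
  assumes K: "is_kernel P" and pol: "is_policy \<pi>"
  obtains D N where "\<And>s d. 0 \<le> d \<Longrightarrow> d < 1 \<Longrightarrow> disc_value P r d \<pi> $ s * poly D d = poly (N s) d"
    and "\<And>d. 0 \<le> d \<Longrightarrow> d < 1 \<Longrightarrow> 0 < poly D d"
proof -
  define M where "M = pol_mat P \<pi>"
  define A where "A i j = [: (if i = j then 1 else 0), - M$i$j :]" for i j
  have A_eq: "mat 1 - d *\<^sub>R M = (\<chi> i j. poly (A i j) d)" for d
    unfolding A_def by (simp add: vec_eq_iff mat_def)
  obtain D where D: "\<And>d. det (mat 1 - d *\<^sub>R M) = poly D d"
    using det_poly_entries[of A] unfolding A_eq by blast
  define A' where "A' k i j = (if j = k then [: pol_rew r \<pi> $ i :] else A i j)" for k i j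
  have "\<forall>k. \<exists>q. \<forall>d. det (\<chi> i j. poly (A' k i j) d) = poly q d"
  proof
    fix k
    obtain q where "\<And>d. det (\<chi> i j. poly (A' k i j) d) = poly q d"
      using det_poly_entries[of "A' k"] by blast
    thus "\<exists>q. \<forall>d. det (\<chi> i j. poly (A' k i j) d) = poly q d"
      by blast
  qed
  then obtain N where N: "\<And>k d. det (\<chi> i j. poly (A' k i j) d) = poly (N k) d"
    by (metis choice)
  have D_nz: "poly D d \<noteq> 0" if "0 \<le> d" "d < 1" for d
    using invertible_mat_1_minus_pol_mat[OF K pol that] by (simp add: invertible_det_nz flip: D M_def)
  have D_pos: "0 < poly D d" if d: "0 \<le> d" "d < 1" for d
  proof (rule ccontr)
    assume "\<not> 0 < poly D d"
    hence neg: "poly D d < 0"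
      using D_nz[OF d] by simp
    have one: "poly D 0 = 1"
      using D[of 0] by simp
    hence "0 < d"
      using neg d by (cases "d = 0") auto
    then obtain x where "0 < x" "x < d" "poly D x = 0"
      using poly_IVT_neg[of 0 d D] one neg by auto
    thus False
      using D_nz[of x] d by simp
  qed
  have "disc_value P r d \<pi> $ s * poly D d = poly (N s) d" if d: "0 \<le> d" "d < 1" for s d
  proof -
    have "(mat 1 - d *\<^sub>R M) *v disc_value P r d \<pi> = pol_rew r \<pi>"
      unfolding M_def by (rule disc_value_linear_eq[OF K pol d])
    hence "disc_value P r d \<pi> = (\<chi> k. det (\<chi> i j. if j = k then pol_rew r \<pi> $ i else (mat 1 - d *\<^sub>R M)$i$j) / det (mat 1 - d *\<^sub>R M))"
      using cramer[of "mat 1 - d *\<^sub>R M"] D_nz[OF d] unfolding D by blast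
    moreover have "(\<chi> i j. if j = s then pol_rew r \<pi> $ i else (mat 1 - d *\<^sub>R M)$i$j) = (\<chi> i j. poly (A' s i j) d)"
      unfolding A_eq A'_def by (simp add: vec_eq_iff)
    ultimately show ?thesis
      using D_nz[OF d] N[of s d] D[of d] by simp
  qed
  with D_pos show ?thesis
    using that by blast
qed

lemma disc_value_diff_poly:
  assumes K: "is_kernel P" and pol: "is_policy \<pi>\<^sub>1" "is_policy \<pi>\<^sub>2"
  obtains R where "\<And>d. 0 \<le> d \<Longrightarrow> d < 1 \<Longrightarrow> \<exists>C>0. poly R d = (disc_value P r d \<pi>\<^sub>1 $ s - disc_value P r d \<pi>\<^sub>2 $ s) * C"
proof -
  obtain D1 N1 where 1: "\<And>s d. 0 \<le> d \<Longrightarrow> d < 1 \<Longrightarrow> disc_value P r d \<pi>\<^sub>1 $ s * poly D1 d = poly (N1 s) d"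
    "\<And>d. 0 \<le> d \<Longrightarrow> d < 1 \<Longrightarrow> 0 < poly D1 d"
    using disc_value_rational[OF K pol(1)] by blast
  obtain D2 N2 where 2: "\<And>s d. 0 \<le> d \<Longrightarrow> d < 1 \<Longrightarrow> disc_value P r d \<pi>\<^sub>2 $ s * poly D2 d = poly (N2 s) d"
    "\<And>d. 0 \<le> d \<Longrightarrow> d < 1 \<Longrightarrow> 0 < poly D2 d"
    using disc_value_rational[OF K pol(2)] by blast
  have "poly (N1 s * D2 - N2 s * D1) d = (disc_value P r d \<pi>\<^sub>1 $ s - disc_value P r d \<pi>\<^sub>2 $ s) * (poly D1 d * poly D2 d)
      \<and> 0 < poly D1 d * poly D2 d" if "0 \<le> d" "d < 1" for d
    using 1(1)[OF that, of s] 1(2)[OF that] 2(1)[OF that, of s] 2(2)[OF that] by (auto simp: algebra_simps)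
  thus ?thesis
    using that by blast
qed

lemma disc_value_eq_of_eq_on_interval:
  assumes K: "is_kernel P" and pol: "is_policy \<pi>\<^sub>1" "is_policy \<pi>\<^sub>2"
    and ab: "0 \<le> a" "a < b" "b \<le> 1"
    and eq: "\<And>d. a < d \<Longrightarrow> d < b \<Longrightarrow> disc_value P r d \<pi>\<^sub>1 = disc_value P r d \<pi>\<^sub>2"
    and \<gamma>: "0 \<le> \<gamma>" "\<gamma> < 1"
  shows "disc_value P r \<gamma> \<pi>\<^sub>1 = disc_value P r \<gamma> \<pi>\<^sub>2"
proof -
  have "disc_value P r \<gamma> \<pi>\<^sub>1 $ s = disc_value P r \<gamma> \<pi>\<^sub>2 $ s" for s
  proof -
    obtain R where R: "\<And>d. 0 \<le> d \<Longrightarrow> d < 1 \<Longrightarrow> \<exists>C>0. poly R d = (disc_value P r d \<pi>\<^sub>1 $ s - disc_value P r d \<pi>\<^sub>2 $ s) * C"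
      using disc_value_diff_poly[OF K pol] by blast
    have "poly R x = 0" if "a < x" "x < b" for x
    proof -
      have "0 \<le> x" "x < 1"
        using that ab by auto
      then obtain C where "poly R x = (disc_value P r x \<pi>\<^sub>1 $ s - disc_value P r x \<pi>\<^sub>2 $ s) * C"
        using R by blast
      thus ?thesis
        using eq[OF that] by simp
    qed
    hence "{a<..<b} \<subseteq> {x. poly R x = 0}"
      by auto
    moreover have "infinite {a<..<b}"
      using ab by simp
    ultimately have "R = 0"
      using finite_subset poly_roots_finite by blast
    thus ?thesis
      using R[OF \<gamma>] by auto
  qed
  thus ?thesis
    by (simp add: vec_eq_iff)
qed

lemma ex_root_free_interval:
  fixes R :: "'i::finite \<Rightarrow> real poly"
  assumes "0 < b"
  obtains a where "0 \<le> a" "a < b" "\<And>i x. R i \<noteq> 0 \<Longrightarrow> a < x \<Longrightarrow> x < b \<Longrightarrow> poly (R i) x \<noteq> 0"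
proof
  define Z where "Z = insert 0 {x. x < b \<and> (\<exists>i. R i \<noteq> 0 \<and> poly (R i) x = 0)}"
  have "{x. x < b \<and> (\<exists>i. R i \<noteq> 0 \<and> poly (R i) x = 0)} \<subseteq> (\<Union>i\<in>{i. R i \<noteq> 0}. {x. poly (R i) x = 0})"
    by auto
  moreover have "finite (\<Union>i\<in>{i. R i \<noteq> 0}. {x. poly (R i) x = 0})"
    by (auto intro: poly_roots_finite)
  ultimately have Z: "finite Z"
    unfolding Z_def using finite_subset by blast
  show "0 \<le> Max Z"
    using Z by (rule Max_ge) (simp add: Z_def)
  have "Max Z \<in> Z"
    using Z by (rule Max_in) (simp add: Z_def)
  thus "Max Z < b"
    using assms by (auto simp: Z_def)
  show "poly (R i) x \<noteq> 0" if "R i \<noteq> 0" "Max Z < x" "x < b" for i x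
  proof
    assume "poly (R i) x = 0"
    hence "x \<in> Z"
      using that by (auto simp: Z_def)
    thus False
      using Max_ge[OF Z, of x] \<open>Max Z < x\<close> by simp
  qed
qed

lemma poly_nonneg_of_root_free:
  fixes p :: "real poly"
  assumes roots: "\<And>x. a < x \<Longrightarrow> x < b \<Longrightarrow> poly p x \<noteq> 0"
    and c: "a < c" "c < b" "0 \<le> poly p c" and d: "a < d" "d \<le> b"
  shows "0 \<le> poly p d"
proof (rule ccontr)
  assume "\<not> 0 \<le> poly p d"
  hence neg: "poly p d < 0"
    by simp
  have pos: "0 < poly p c"
    using c roots[of c] by (simp add: order_le_less)
  have "\<exists>x. a < x \<and> x < b \<and> poly p x = 0"
  proof (cases "d < c")
    case True
    then obtain x where x: "d < x" "x < c" "poly p x = 0"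
      using poly_IVT_pos[OF True neg pos] by blast
    hence "a < x \<and> x < b"
      using c d by auto
    thus ?thesis
      using x by blast
  next
    case False
    hence "c < d"
      using neg pos by (cases "c = d") auto
    then obtain x where x: "c < x" "x < d" "poly p x = 0"
      using poly_IVT_neg[OF _ pos neg] by blast
    hence "a < x \<and> x < b"
      using c d by auto
    thus ?thesis
      using x by blast
  qed
  thus False
    using roots by blast
qed

text \<open>Blackwell's argument: the polynomials governing the sign of \<open>V\<^sub>f - V\<^sub>g\<close> for deterministic \<open>f, g\<close>
  have no root in some \<open>(d\<^sub>0, \<gamma>\<^sub>0)\<close>, so a policy optimal at one point of it is optimal throughout.\<close>

lemma ex_det_policy_optimal_near:
  fixes P :: "'s::finite \<Rightarrow> 'a::finite \<Rightarrow> 's \<Rightarrow> real"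
  assumes K: "is_kernel P" and \<gamma>\<^sub>0: "0 < \<gamma>\<^sub>0" "\<gamma>\<^sub>0 < 1"
  obtains f d\<^sub>0 where "0 \<le> d\<^sub>0" "d\<^sub>0 < \<gamma>\<^sub>0"
    and "\<And>d \<pi> s. d\<^sub>0 < d \<Longrightarrow> d \<le> \<gamma>\<^sub>0 \<Longrightarrow> is_policy \<pi> \<Longrightarrow>
           disc_value P r d \<pi> $ s \<le> disc_value P r d (det_policy f) $ s"
proof -
  define W where "W d f = disc_value P r d (det_policy f)" for d f
  have "\<forall>i :: ('s \<Rightarrow> 'a) \<times> ('s \<Rightarrow> 'a) \<times> 's. \<exists>R. \<forall>d. 0 \<le> d \<and> d < 1 \<longrightarrow>
      (\<exists>C>0. poly R d = (W d (fst i) $ snd (snd i) - W d (fst (snd i)) $ snd (snd i)) * C)"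
  proof
    fix i :: "('s \<Rightarrow> 'a) \<times> ('s \<Rightarrow> 'a) \<times> 's"
    obtain R where "\<And>d. 0 \<le> d \<Longrightarrow> d < 1 \<Longrightarrow>
        \<exists>C>0. poly R d = (W d (fst i) $ snd (snd i) - W d (fst (snd i)) $ snd (snd i)) * C"
      using disc_value_diff_poly[OF K is_policy_det_policy[of "fst i"] is_policy_det_policy[of "fst (snd i)"],
          where r = r and s = "snd (snd i)"]
      unfolding W_def by blast
    thus "\<exists>R. \<forall>d. 0 \<le> d \<and> d < 1 \<longrightarrow>
        (\<exists>C>0. poly R d = (W d (fst i) $ snd (snd i) - W d (fst (snd i)) $ snd (snd i)) * C)"
      by blast
  qed
  from choice[OF this] obtain R where R0: "\<forall>i d. 0 \<le> d \<and> d < 1 \<longrightarrow>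
      (\<exists>C>0. poly (R i) d = (W d (fst i) $ snd (snd i) - W d (fst (snd i)) $ snd (snd i)) * C)"
    by blast
  have R: "\<exists>C>0. poly (R (f, g, s)) d = (W d f $ s - W d g $ s) * C" if "0 \<le> d" "d < 1" for f g s d
    using spec[OF spec[OF R0, of "(f, g, s)"], of d] that by simp
  obtain d\<^sub>0 where d\<^sub>0: "0 \<le> d\<^sub>0" "d\<^sub>0 < \<gamma>\<^sub>0"
    and roots: "\<And>i x. R i \<noteq> 0 \<Longrightarrow> d\<^sub>0 < x \<Longrightarrow> x < \<gamma>\<^sub>0 \<Longrightarrow> poly (R i) x \<noteq> 0"
    using ex_root_free_interval[OF \<gamma>\<^sub>0(1), where R = R] by blast
  define d\<^sub>1 where "d\<^sub>1 = (d\<^sub>0 + \<gamma>\<^sub>0) / 2"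
  have d\<^sub>1: "d\<^sub>0 < d\<^sub>1" "d\<^sub>1 < \<gamma>\<^sub>0"
    using d\<^sub>0 unfolding d\<^sub>1_def by auto
  have d\<^sub>1_range: "0 \<le> d\<^sub>1" "d\<^sub>1 < 1"
    using d\<^sub>0 d\<^sub>1 \<gamma>\<^sub>0 by auto
  obtain f where f: "\<And>\<pi> s. is_policy \<pi> \<Longrightarrow> disc_value P r d\<^sub>1 \<pi> $ s \<le> disc_value P r d\<^sub>1 (det_policy f) $ s"
    by (rule ex_optimal_det_policy[OF K d\<^sub>1_range]) (rule that)
  have det_le: "W d g $ s \<le> W d f $ s" if d: "d\<^sub>0 < d" "d \<le> \<gamma>\<^sub>0" for g s d
  proof -
    have "0 \<le> poly (R (f, g, s)) d"
    proof (cases "R (f, g, s) = 0")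
      case False
      obtain C where "C > 0" "poly (R (f, g, s)) d\<^sub>1 = (W d\<^sub>1 f $ s - W d\<^sub>1 g $ s) * C"
        using R[of d\<^sub>1 f g s] d\<^sub>0 d\<^sub>1 \<gamma>\<^sub>0 by auto
      hence "0 \<le> poly (R (f, g, s)) d\<^sub>1"
        using f[OF is_policy_det_policy, of g s] unfolding W_def by simp
      from poly_nonneg_of_root_free[OF roots[OF False] d\<^sub>1 this d] show ?thesis .
    qed simp
    moreover obtain C where "C > 0" "poly (R (f, g, s)) d = (W d f $ s - W d g $ s) * C"
      using R[of d f g s] d d\<^sub>0 \<gamma>\<^sub>0 by auto
    ultimately show ?thesis
      by (simp add: zero_le_mult_iff)
  qed
  show ?thesis
  proof (rule that[OF d\<^sub>0])
    fix d and \<pi> :: "'s \<Rightarrow> 'a \<Rightarrow> real" and s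
    assume d: "d\<^sub>0 < d" "d \<le> \<gamma>\<^sub>0" and pol: "is_policy \<pi>"
    have d_range: "0 \<le> d" "d < 1"
      using d d\<^sub>0 \<gamma>\<^sub>0 by auto
    obtain h where "\<And>\<pi> s. is_policy \<pi> \<Longrightarrow> disc_value P r d \<pi> $ s \<le> disc_value P r d (det_policy h) $ s"
      by (rule ex_optimal_det_policy[OF K d_range]) (rule that)
    thus "disc_value P r d \<pi> $ s \<le> disc_value P r d (det_policy f) $ s"
      using det_le[OF d, of h s] pol unfolding W_def by (meson order_trans)
  qed
qed

section \<open>Ces\<agrave>ro limits and matrix powers\<close>

lemma tendsto_cesaro_mean:
  fixes X :: "nat \<Rightarrow> 'v::real_normed_vector"
  assumes X: "X \<longlonglongrightarrow> L"
  shows "(\<lambda>N. (1 / real N) *\<^sub>R (\<Sum>T<N. X T)) \<longlonglongrightarrow> L"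
proof (rule LIMSEQ_I)
  fix e :: real
  assume e: "0 < e"
  obtain K where K: "\<And>T. T \<ge> K \<Longrightarrow> norm (X T - L) < e/2"
    using LIMSEQ_D[OF X, of "e/2"] e by auto
  define B where "B = (\<Sum>T<K. norm (X T - L))"
  have "norm ((1 / real N) *\<^sub>R (\<Sum>T<N. X T) - L) < e" if N: "N \<ge> max (K + 1) (nat \<lceil>2 * B / e\<rceil> + 1)" for N
  proof -
    have N_pos: "N \<ge> 1" "N \<ge> K"
      using N by auto
    have "2 * B / e < real N"
      using N by linarith
    hence NB: "2 * B < real N * e"
      using e by (simp add: divide_less_eq)
    have "norm (\<Sum>T<N. X T - L) \<le> (\<Sum>T<N. norm (X T - L))"
      by (rule norm_sum)
    also have "\<dots> = B + (\<Sum>T\<in>{K..<N}. norm (X T - L))"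
      unfolding B_def using N_pos sum.atLeastLessThan_concat[of 0 K N "\<lambda>T. norm (X T - L)"]
      by (simp add: atLeast0LessThan)
    also have "(\<Sum>T\<in>{K..<N}. norm (X T - L)) \<le> real (card {K..<N}) * (e/2)"
      by (rule sum_bounded_above) (use K in \<open>fastforce intro: less_imp_le\<close>)
    also have "\<dots> \<le> real N * (e/2)"
      using e by (intro mult_right_mono) auto
    finally have "norm (\<Sum>T<N. X T - L) \<le> B + real N * (e/2)"
      by simp
    moreover have "(1 / real N) *\<^sub>R (\<Sum>T<N. X T) - L = (1 / real N) *\<^sub>R (\<Sum>T<N. X T - L)"
      using N_pos by (simp add: sum_subtractf scaleR_diff_right sum_constant_scaleR)
    ultimately have "norm ((1 / real N) *\<^sub>R (\<Sum>T<N. X T) - L) \<le> (B + real N * (e/2)) / real N"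
      using N_pos by (simp add: divide_right_mono)
    also have "\<dots> < e"
      using N_pos NB by (simp add: field_simps)
    finally show ?thesis .
  qed
  thus "\<exists>N0. \<forall>N\<ge>N0. norm ((1 / real N) *\<^sub>R (\<Sum>T<N. X T) - L) < e"
    by blast
qed

lemma cesaro_lim_eq: "X \<longlonglongrightarrow> L \<Longrightarrow> cesaro_lim X = L"
  unfolding cesaro_lim_def by (rule limI[OF tendsto_cesaro_mean])

lemma mpow_mult_comm: "mpow M t ** M = M ** mpow M t"
proof (induction t)
  case (Suc t)
  have "mpow M (Suc t) ** M = M ** (mpow M t ** M)"
    by (simp add: matrix_mul_assoc)
  also have "\<dots> = M ** mpow M (Suc t)"
    using Suc by simp
  finally show ?case .
qed simp

lemma mpow_Suc_mult: "mpow M (Suc t) *v x = mpow M t *v (M *v x)"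
  by (simp add: matrix_vector_mul_assoc mpow_mult_comm)

lemma mpow_mult_fixed: "M *v x = x \<Longrightarrow> mpow M t *v x = x"
  by (induction t) (simp_all add: matrix_vector_mul_assoc[symmetric])

lemma matrix_tendsto_of_columns:
  fixes A :: "nat \<Rightarrow> real^'n::finite^'m::finite"
  assumes "\<And>j. convergent (\<lambda>t. A t *v axis j 1)"
  shows "convergent A"
proof -
  obtain c where c: "\<And>j. (\<lambda>t. A t *v axis j 1) \<longlonglongrightarrow> c j"
    using assms unfolding convergent_def by metis
  have "(\<lambda>t. A t $ i $ j) \<longlonglongrightarrow> c j $ i" for i j
    using tendsto_vec_nth[OF c[of j], of i] by (simp add: matrix_vector_mult_basis column_def)
  hence "A \<longlonglongrightarrow> (\<chi> i j. c j $ i)"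
    by (intro vec_tendstoI) simp
  thus ?thesis
    unfolding convergent_def by blast
qed

section \<open>The anchored kernel\<close>

locale anchored_mdp =
  fixes P :: "'s::finite \<Rightarrow> 'a::finite \<Rightarrow> 's \<Rightarrow> real" and n :: nat and s0 :: 's
  assumes kernel: "is_kernel P" and n_ge_2: "n \<ge> 2"
begin

abbreviation Q :: "'s \<Rightarrow> 'a \<Rightarrow> 's \<Rightarrow> real" where
  "Q \<equiv> anchored n s0 P"

abbreviation \<gamma> :: real where
  "\<gamma> \<equiv> 1 - 1 / real n"

lemma gamma_pos: "0 < \<gamma>" and gamma_less_1: "\<gamma> < 1"
  using n_ge_2 by (auto simp: field_simps)

lemma gamma_nonneg: "0 \<le> \<gamma>"
  using gamma_pos by simp

lemma residual_over_one_minus_gamma: "(1 / real n ^ 2) / (1 - \<gamma>) = 1 / real n"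
  using n_ge_2 by (simp add: power2_eq_square)

lemma discounted_residual_le: "(\<gamma> / real n ^ 2) / (1 - \<gamma>) \<le> 1 / real n"
  using n_ge_2 by (simp add: field_simps power2_eq_square)

lemma gamma_split: "\<gamma> * x + x / real n = x"
  using n_ge_2 by (simp add: field_simps)

lemma anchored_mean:
  "(\<Sum>s'\<in>UNIV. Q s a s' * h$s') = \<gamma> * (\<Sum>s'\<in>UNIV. P s a s' * h$s') + h$s0 / real n"
proof -
  have "(\<Sum>s'\<in>UNIV. Q s a s' * h$s') = (\<Sum>s'\<in>UNIV. \<gamma> * (P s a s' * h$s') + (if s' = s0 then h$s0 / real n else 0))"
    unfolding anchored_def by (rule sum.cong) (auto simp: algebra_simps)
  thus ?thesis
    by (simp add: sum.distrib sum_distrib_left)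
qed

lemma is_kernel_anchored: "is_kernel Q"
proof -
  have "(\<Sum>s'\<in>UNIV. Q s a s') = 1" for s a
    using anchored_mean[of s a 1] kernel gamma_split[of 1] by (simp add: is_kernel_def)
  moreover have "0 \<le> Q s a s'" for s a s'
    using kernel gamma_pos unfolding anchored_def is_kernel_def by auto
  ultimately show ?thesis
    unfolding is_kernel_def by blast
qed

lemma pol_mat_anchored_mult_nth:
  assumes "is_policy \<pi>"
  shows "(pol_mat Q \<pi> *v y) $ s = \<gamma> * (pol_mat P \<pi> *v y) $ s + y$s0 / real n"
proof -
  have "(pol_mat Q \<pi> *v y) $ s = (\<Sum>a\<in>UNIV. \<pi> s a * (\<gamma> * (\<Sum>s'\<in>UNIV. P s a s' * y$s')) + \<pi> s a * (y$s0 / real n))"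
    unfolding pol_mat_mult_nth anchored_mean by (simp add: algebra_simps)
  also have "\<dots> = \<gamma> * (pol_mat P \<pi> *v y) $ s + (\<Sum>a\<in>UNIV. \<pi> s a) * (y$s0 / real n)"
    by (simp add: pol_mat_mult_nth sum.distrib sum_distrib_left sum_distrib_right sum_divide_distrib algebra_simps)
  finally show ?thesis
    using assms unfolding is_policy_def by simp
qed

text \<open>Every row of \<open>Q\<close> puts mass \<open>1/n\<close> on \<open>s0\<close>, which is why \<open>Q\<^sub>\<pi>\<close> contracts the span by \<open>\<gamma>\<close>.\<close>

lemma anchored_span_contraction:
  fixes y :: "real^'s"
  assumes pol: "is_policy \<pi>"
  defines "y' \<equiv> pol_mat Q \<pi> *v y"
  shows "vmax y' \<le> vmax y" "vmin y \<le> vmin y'" "vmax y' - vmin y' \<le> \<gamma> * (vmax y - vmin y)"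
proof -
  have y': "y'$s = \<gamma> * (pol_mat P \<pi> *v y) $ s + y$s0 / real n" for s
    unfolding y'_def by (rule pol_mat_anchored_mult_nth[OF pol])
  have upper: "y'$s \<le> \<gamma> * vmax y + y$s0 / real n" for s
  proof -
    have "\<gamma> * (pol_mat P \<pi> *v y) $ s \<le> \<gamma> * vmax y"
      using pol_mat_mult_le[OF kernel pol vmax_ge] gamma_pos by (intro mult_left_mono) auto
    thus ?thesis
      using y'[of s] by linarith
  qed
  have lower: "\<gamma> * vmin y + y$s0 / real n \<le> y'$s" for s
  proof -
    have "\<gamma> * vmin y \<le> \<gamma> * (pol_mat P \<pi> *v y) $ s"
      using pol_mat_mult_ge[OF kernel pol vmin_le] gamma_pos by (intro mult_left_mono) auto
    thus ?thesis
      using y'[of s] by linarith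
  qed
  have "y$s0 / real n \<le> vmax y / real n" "vmin y / real n \<le> y$s0 / real n"
    using n_ge_2 vmax_ge[of y s0] vmin_le[of y s0] by (simp_all add: divide_right_mono)
  hence "y'$s \<le> vmax y" "vmin y \<le> y'$s" for s
    using upper[of s] lower[of s] gamma_split[of "vmax y"] gamma_split[of "vmin y"] by linarith+
  thus "vmax y' \<le> vmax y" "vmin y \<le> vmin y'"
    by (simp_all add: vmax_le vmin_ge)
  have "vmax y' \<le> \<gamma> * vmax y + y$s0 / real n" "\<gamma> * vmin y + y$s0 / real n \<le> vmin y'"
    by (simp_all add: vmax_le[OF upper] vmin_ge[OF lower])
  thus "vmax y' - vmin y' \<le> \<gamma> * (vmax y - vmin y)"
    by (simp add: right_diff_distrib)
qed

lemma anchored_pow_mult_tendsto_const: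
  assumes pol: "is_policy \<pi>"
  obtains c where "\<And>s. (\<lambda>t. (mpow (pol_mat Q \<pi>) t *v x) $ s) \<longlonglongrightarrow> c"
proof -
  define y where "y t = mpow (pol_mat Q \<pi>) t *v x" for t
  have y_Suc: "y (Suc t) = pol_mat Q \<pi> *v y t" for t
    unfolding y_def by (simp add: matrix_vector_mul_assoc)
  have dec: "decseq (\<lambda>t. vmax (y t))" and inc: "incseq (\<lambda>t. vmin (y t))"
    unfolding decseq_Suc_iff incseq_Suc_iff y_Suc using anchored_span_contraction[OF pol] by auto
  have span: "vmax (y t) - vmin (y t) \<le> \<gamma> ^ t * (vmax (y 0) - vmin (y 0))" for t
  proof (induction t)
    case (Suc t)
    have "vmax (y (Suc t)) - vmin (y (Suc t)) \<le> \<gamma> * (vmax (y t) - vmin (y t))"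
      unfolding y_Suc by (rule anchored_span_contraction(3)[OF pol])
    also have "\<dots> \<le> \<gamma> * (\<gamma> ^ t * (vmax (y 0) - vmin (y 0)))"
      using Suc gamma_pos by (intro mult_left_mono) auto
    finally show ?case
      by (simp add: mult.assoc)
  qed simp
  have vmin_le_vmax: "vmin v \<le> vmax v" for v :: "real^'s"
    using vmin_le vmax_ge order_trans by blast
  have "vmin (y 0) \<le> vmax (y t)" for t
    using incseqD[OF inc le0, of t] vmin_le_vmax[of "y t"] by simp
  then obtain c where c: "(\<lambda>t. vmax (y t)) \<longlonglongrightarrow> c"
    using decseq_convergent[OF dec] by blast
  have "(\<lambda>t. \<gamma> ^ t * (vmax (y 0) - vmin (y 0))) \<longlonglongrightarrow> 0"
    using gamma_pos gamma_less_1 by (intro tendsto_mult_left_zero LIMSEQ_power_zero) auto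
  hence "(\<lambda>t. vmax (y t) - vmin (y t)) \<longlonglongrightarrow> 0"
    by (rule tendsto_sandwich[rotated 2, OF tendsto_const])
      (simp_all add: span vmin_le_vmax)
  hence "(\<lambda>t. vmin (y t)) \<longlonglongrightarrow> c"
    using tendsto_diff[OF c] by force
  hence "(\<lambda>t. y t $ s) \<longlonglongrightarrow> c" for s
    using c by (rule tendsto_sandwich[rotated 2]) (simp_all add: vmin_le vmax_ge)
  thus ?thesis
    using that unfolding y_def by blast
qed

lemma convergent_anchored_pow:
  assumes "is_policy \<pi>"
  shows "convergent (mpow (pol_mat Q \<pi>))"
proof (rule matrix_tendsto_of_columns)
  fix j
  obtain c where "\<And>s. (\<lambda>t. (mpow (pol_mat Q \<pi>) t *v axis j 1) $ s) \<longlonglongrightarrow> c"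
    using anchored_pow_mult_tendsto_const[OF assms, of "axis j 1"] by blast
  hence "(\<lambda>t. mpow (pol_mat Q \<pi>) t *v axis j 1) \<longlonglongrightarrow> (\<chi> s. c)"
    by (intro vec_tendstoI) simp
  thus "convergent (\<lambda>t. mpow (pol_mat Q \<pi>) t *v axis j 1)"
    unfolding convergent_def by blast
qed

lemma pol_rew_eq_anchored:
  fixes r :: "'s \<Rightarrow> 'a \<Rightarrow> real"
  assumes pol: "is_policy \<pi>"
  defines "V \<equiv> disc_value P r \<gamma> \<pi>"
  shows "pol_rew r \<pi> = V - pol_mat Q \<pi> *v V + (\<chi> s. V$s0 / real n)"
proof -
  have "V = pol_rew r \<pi> + \<gamma> *\<^sub>R (pol_mat P \<pi> *v V)"
    using disc_value_fixpoint[OF kernel pol gamma_nonneg gamma_less_1, of r]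
    unfolding V_def pol_bellman_def by simp
  thus ?thesis
    by (simp add: vec_eq_iff pol_mat_anchored_mult_nth[OF pol] algebra_simps)
qed

lemma pow_anchored_mult_pol_rew:
  fixes r :: "'s \<Rightarrow> 'a \<Rightarrow> real"
  assumes pol: "is_policy \<pi>"
  defines "V \<equiv> disc_value P r \<gamma> \<pi>" and "M \<equiv> pol_mat Q \<pi>"
  shows "mpow M t *v pol_rew r \<pi> = mpow M t *v V - mpow M (Suc t) *v V + (\<chi> s. V$s0 / real n)"
proof -
  have "M *v (\<chi> s. c) = (\<chi> s. c)" for c
    unfolding M_def by (rule pol_mat_mult_const[OF is_kernel_anchored pol])
  thus ?thesis
    unfolding pol_rew_eq_anchored[OF pol] V_def[symmetric] M_def[symmetric]
    by (simp add: matrix_vector_mult_diff_distrib matrix_vector_right_distrib mpow_mult_fixed mpow_Suc_mult del: mpow.simps(2))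
qed

lemma gain_anchored:
  assumes pol: "is_policy \<pi>"
  shows "gain Q r \<pi> = (\<chi> s. disc_value P r \<gamma> \<pi> $ s0 / real n)"
proof -
  define V where "V = disc_value P r \<gamma> \<pi>"
  define M where "M = pol_mat Q \<pi>"
  obtain L where L: "mpow M \<longlonglongrightarrow> L"
    using convergent_anchored_pow[OF pol] unfolding M_def convergent_def by blast
  obtain c where c: "\<And>s. (\<lambda>t. (mpow M t *v V) $ s) \<longlonglongrightarrow> c"
    unfolding M_def using anchored_pow_mult_tendsto_const[OF pol] by blast
  have "(L *v pol_rew r \<pi>) $ s = V$s0 / real n" for s
  proof (rule LIMSEQ_unique)
    show "(\<lambda>t. (mpow M t *v pol_rew r \<pi>) $ s) \<longlonglongrightarrow> (L *v pol_rew r \<pi>) $ s"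
      unfolding matrix_vector_mult_def using L by (simp, intro tendsto_intros)
    have "(\<lambda>t. (mpow M t *v V) $ s - (mpow M (Suc t) *v V) $ s + V$s0 / real n) \<longlonglongrightarrow> c - c + V$s0 / real n"
      by (intro tendsto_intros c LIMSEQ_Suc[OF c])
    thus "(\<lambda>t. (mpow M t *v pol_rew r \<pi>) $ s) \<longlonglongrightarrow> V$s0 / real n"
      unfolding M_def V_def pow_anchored_mult_pol_rew[OF pol] by simp
  qed
  thus ?thesis
    unfolding gain_def M_def[symmetric] cesaro_lim_eq[OF L] V_def by (simp add: vec_eq_iff)
qed

lemma bias_anchored:
  assumes pol: "is_policy \<pi>"
  obtains c where "bias Q r \<pi> = disc_value P r \<gamma> \<pi> - (\<chi> s. c)"
proof -
  define V where "V = disc_value P r \<gamma> \<pi>"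
  define M where "M = pol_mat Q \<pi>"
  obtain c where c: "\<And>s. (\<lambda>t. (mpow M t *v V) $ s) \<longlonglongrightarrow> c"
    unfolding M_def using anchored_pow_mult_tendsto_const[OF pol] by blast
  have "(\<Sum>t<T. mpow M t *v pol_rew r \<pi> - gain Q r \<pi>) = V - mpow M T *v V" for T
    unfolding gain_anchored[OF pol] M_def V_def pow_anchored_mult_pol_rew[OF pol]
    by (simp del: mpow.simps(2)) (subst sum_lessThan_telescope', simp)
  moreover have "(\<lambda>T. V - mpow M T *v V) \<longlonglongrightarrow> V - (\<chi> s. c)"
    by (intro vec_tendstoI) (simp, intro tendsto_intros c)
  ultimately have "bias Q r \<pi> = V - (\<chi> s. c)"
    unfolding bias_def M_def[symmetric] by (simp add: cesaro_lim_eq)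
  thus ?thesis
    using that V_def by blast
qed

section \<open>Blackwell-optimal policies of the anchored kernel\<close>

text \<open>A restart at \<open>s0\<close> with probability \<open>1/n\<close> turns the discount \<open>b\<close> for \<open>Q\<close> into the discount \<open>b \<gamma>\<close> for \<open>P\<close>.\<close>

lemma disc_value_anchored:
  assumes pol: "is_policy \<pi>" and b: "0 \<le> b" "b < 1"
  shows "disc_value Q r b \<pi>
    = disc_value P r (b * \<gamma>) \<pi> + (\<chi> s. b / (real n * (1 - b)) * disc_value P r (b * \<gamma>) \<pi> $ s0)"
proof (rule disc_value_unique[OF is_kernel_anchored pol b])
  define W where "W = disc_value P r (b * \<gamma>) \<pi>"
  define c where "c = b / (real n * (1 - b))"
  have "b * \<gamma> \<le> b"
    using b gamma_less_1 by (simp add: mult_left_le)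
  hence "0 \<le> b * \<gamma>" "b * \<gamma> < 1"
    using b gamma_pos by auto
  hence W: "W = pol_rew r \<pi> + (b * \<gamma>) *\<^sub>R (pol_mat P \<pi> *v W)"
    using disc_value_fixpoint[OF kernel pol] unfolding W_def pol_bellman_def by metis
  have "b * (c + 1 / real n) = c"
    using n_ge_2 b unfolding c_def by (simp add: field_simps)
  hence "c * W$s0 = b * (c + 1 / real n) * W$s0"
    by simp
  hence shift: "b * (W$s0 / real n) + b * (c * W$s0) = c * W$s0"
    by (simp add: algebra_simps)
  have "(pol_bellman Q r b \<pi> (W + (\<chi> s. c * W$s0))) $ s = (W + (\<chi> s. c * W$s0)) $ s" for s
  proof -
    have "(pol_mat Q \<pi> *v (W + (\<chi> s. c * W$s0))) $ s = (pol_mat Q \<pi> *v W) $ s + c * W$s0"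
      by (simp add: matrix_vector_right_distrib pol_mat_mult_const[OF is_kernel_anchored pol])
    hence "(pol_bellman Q r b \<pi> (W + (\<chi> s. c * W$s0))) $ s
        = pol_rew r \<pi> $ s + b * (pol_mat Q \<pi> *v W) $ s + b * (c * W$s0)"
      by (simp add: pol_bellman_def distrib_left)
    moreover have "b * (pol_mat Q \<pi> *v W) $ s = b * \<gamma> * (pol_mat P \<pi> *v W) $ s + b * (W$s0 / real n)"
      by (simp only: pol_mat_anchored_mult_nth[OF pol] distrib_left mult.assoc)
    moreover have "W$s = pol_rew r \<pi> $ s + b * \<gamma> * (pol_mat P \<pi> *v W) $ s"
      by (subst W) (simp only: vector_add_component vector_scaleR_component real_scaleR_def)
    ultimately show ?thesis
      using shift by simp
  qed
  thus "pol_bellman Q r b \<pi> (W + (\<chi> s. c * W$s0)) = W + (\<chi> s. c * W$s0)"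
    by (simp add: vec_eq_iff)
qed

lemma disc_value_anchored_mono:
  assumes pol: "is_policy \<pi>" "is_policy \<pi>'" and b: "0 \<le> b" "b < 1"
    and le: "\<And>t. disc_value P r (b * \<gamma>) \<pi>' $ t \<le> disc_value P r (b * \<gamma>) \<pi> $ t"
  shows "disc_value Q r b \<pi>' $ s \<le> disc_value Q r b \<pi> $ s"
proof -
  have "b / (real n * (1 - b)) * disc_value P r (b * \<gamma>) \<pi>' $ s0 \<le> b / (real n * (1 - b)) * disc_value P r (b * \<gamma>) \<pi> $ s0"
    using le b by (intro mult_left_mono) auto
  thus ?thesis
    using le[of s] by (simp add: disc_value_anchored[OF pol(1) b] disc_value_anchored[OF pol(2) b])
qed

lemma ex_blackwell_optimal: "\<exists>\<pi>. blackwell_optimal Q r \<pi>"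
proof -
  obtain f d\<^sub>0 where d\<^sub>0: "0 \<le> d\<^sub>0" "d\<^sub>0 < \<gamma>"
    and f: "\<And>d \<pi> s. d\<^sub>0 < d \<Longrightarrow> d \<le> \<gamma> \<Longrightarrow> is_policy \<pi> \<Longrightarrow>
              disc_value P r d \<pi> $ s \<le> disc_value P r d (det_policy f) $ s"
    by (rule ex_det_policy_optimal_near[OF kernel gamma_pos gamma_less_1]) (rule that)
  have dom: "disc_value Q r b \<pi> $ s \<le> disc_value Q r b (det_policy f) $ s"
    if b: "d\<^sub>0 / \<gamma> < b" "b < 1" and pol: "is_policy \<pi>" for b \<pi> s
  proof (rule disc_value_anchored_mono[OF is_policy_det_policy pol])
    have "0 \<le> d\<^sub>0 / \<gamma>"
      using d\<^sub>0 gamma_pos by simp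
    thus "0 \<le> b"
      using b by linarith
    have "d\<^sub>0 < b * \<gamma>"
      using b(1) by (simp only: pos_divide_less_eq[OF gamma_pos])
    moreover have "b * \<gamma> \<le> 1 * \<gamma>"
      using b(2) gamma_pos by (intro mult_right_mono) auto
    hence "b * \<gamma> \<le> \<gamma>"
      by (simp only: mult_1)
    ultimately show "disc_value P r (b * \<gamma>) \<pi> $ t \<le> disc_value P r (b * \<gamma>) (det_policy f) $ t" for t
      by (rule f[OF _ _ pol])
  qed (use b in simp)
  have "blackwell_optimal Q r (det_policy f)"
    unfolding blackwell_optimal_def
  proof (intro conjI is_policy_det_policy exI[of _ "d\<^sub>0 / \<gamma>"] allI impI)
    show "d\<^sub>0 / \<gamma> < 1"
      using d\<^sub>0 gamma_pos by simp
    fix b and \<pi> :: "'s \<Rightarrow> 'a \<Rightarrow> real" and s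
    assume "d\<^sub>0 / \<gamma> < b \<and> b < 1" "is_policy \<pi>"
    thus "disc_value Q r b \<pi> $ s \<le> disc_value Q r b (det_policy f) $ s"
      using dom by blast
  qed
  thus ?thesis
    by blast
qed

lemma disc_value_blackwell_optimal:
  assumes bw: "blackwell_optimal Q r \<pi>"
  shows "disc_value P r \<gamma> \<pi> = opt_disc_value P r \<gamma>"
proof -
  have pol: "is_policy \<pi>"
    and "\<exists>b\<^sub>0<1. \<forall>b. b\<^sub>0 < b \<and> b < 1 \<longrightarrow>
           (\<forall>\<pi>'. is_policy \<pi>' \<longrightarrow> (\<forall>s. disc_value Q r b \<pi>' $ s \<le> disc_value Q r b \<pi> $ s))"
    using bw unfolding blackwell_optimal_def by blast+
  then obtain b\<^sub>0 where b\<^sub>0: "b\<^sub>0 < 1"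
    and \<pi>_opt: "\<And>b \<pi>' s. b\<^sub>0 < b \<Longrightarrow> b < 1 \<Longrightarrow> is_policy \<pi>' \<Longrightarrow> disc_value Q r b \<pi>' $ s \<le> disc_value Q r b \<pi> $ s"
    by blast
  obtain f d\<^sub>0 where d\<^sub>0: "0 \<le> d\<^sub>0" "d\<^sub>0 < \<gamma>"
    and f: "\<And>d \<pi> s. d\<^sub>0 < d \<Longrightarrow> d \<le> \<gamma> \<Longrightarrow> is_policy \<pi> \<Longrightarrow>
              disc_value P r d \<pi> $ s \<le> disc_value P r d (det_policy f) $ s"
    by (rule ex_det_policy_optimal_near[OF kernel gamma_pos gamma_less_1]) (rule that)
  define m where "m = max b\<^sub>0 (d\<^sub>0 / \<gamma>)"
  have "0 \<le> d\<^sub>0 / \<gamma>"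
    using d\<^sub>0(1) gamma_pos by (rule divide_nonneg_pos)
  moreover have "d\<^sub>0 / \<gamma> < 1"
    using d\<^sub>0(2) by (simp only: pos_divide_less_eq[OF gamma_pos] mult_1)
  ultimately have m: "0 \<le> m" "m < 1" "b\<^sub>0 \<le> m" "d\<^sub>0 / \<gamma> \<le> m"
    using b\<^sub>0 unfolding m_def by auto
  define a where "a = m * \<gamma>"
  have "m * \<gamma> < 1 * \<gamma>"
    using m(2) gamma_pos by (intro mult_strict_right_mono)
  hence a: "0 \<le> a" "a < \<gamma>" "d\<^sub>0 \<le> a"
    using m gamma_pos unfolding a_def by (auto simp only: mult_1 pos_divide_le_eq[OF gamma_pos, symmetric])
  text \<open>For \<open>d\<close> close to \<open>\<gamma>\<close>, optimality of \<open>\<pi>\<close> for \<open>Q\<close> at \<open>d/\<gamma>\<close> forces \<open>\<pi>\<close> to be optimal for \<open>P\<close> at \<open>d\<close>.\<close>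
  have "disc_value P r d \<pi> = disc_value P r d (det_policy f)" if d: "a < d" "d < \<gamma>" for d
  proof -
    define b where "b = d / \<gamma>"
    have "m < b"
      using d(1) unfolding a_def b_def by (simp only: pos_less_divide_eq[OF gamma_pos])
    moreover have "b < 1"
      using d(2) unfolding b_def by (simp only: pos_divide_less_eq[OF gamma_pos] mult_1)
    moreover have "b * \<gamma> = d"
      using nonzero_eq_divide_eq[OF gamma_pos[THEN less_imp_neq, symmetric]] b_def by blast
    ultimately have bd: "b * \<gamma> = d" "0 \<le> b" "b < 1" "b\<^sub>0 < b"
      using m by auto
    have le: "disc_value P r d \<pi> $ t \<le> disc_value P r d (det_policy f) $ t" for t
      using f[OF _ _ pol] d a by simp
    define k where "k = b / (real n * (1 - b))"
    have Q_value: "disc_value Q r b \<pi>' $ s = disc_value P r d \<pi>' $ s + k * disc_value P r d \<pi>' $ s0"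
      if "is_policy \<pi>'" for \<pi>' s
      using disc_value_anchored[OF that bd(2,3)] bd(1) unfolding k_def by simp
    have k: "k * disc_value P r d \<pi> $ s0 \<le> k * disc_value P r d (det_policy f) $ s0"
      using le bd unfolding k_def by (intro mult_left_mono) auto
    have "disc_value P r d (det_policy f) $ s \<le> disc_value P r d \<pi> $ s" for s
    proof -
      have "disc_value Q r b (det_policy f) $ s \<le> disc_value Q r b \<pi> $ s"
        using \<pi>_opt[OF bd(4,3) is_policy_det_policy] .
      thus ?thesis
        using Q_value[OF pol, where s = s] Q_value[OF is_policy_det_policy[of f], where s = s] k by linarith
    qed
    thus ?thesis
      using le by (auto simp: vec_eq_iff intro: antisym)
  qed
  hence "disc_value P r \<gamma> \<pi> = disc_value P r \<gamma> (det_policy f)"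
    using disc_value_eq_of_eq_on_interval[OF kernel pol is_policy_det_policy a(1,2) less_imp_le[OF gamma_less_1]
        _ less_imp_le[OF gamma_pos] gamma_less_1]
    by blast
  also have "\<dots> = opt_disc_value P r \<gamma>"
    by (rule opt_disc_value_eqI[symmetric, OF is_policy_det_policy]) (use f d\<^sub>0 in simp)
  finally show ?thesis .
qed

lemma opt_gain_anchored: "opt_gain Q r = (\<chi> s. opt_disc_value P r \<gamma> $ s0 / real n)"
  and opt_bias_anchored: "\<exists>c. opt_bias Q r = opt_disc_value P r \<gamma> - (\<chi> s. c)"
proof -
  define \<pi> where "\<pi> = (SOME \<pi>. blackwell_optimal Q r \<pi>)"
  have bw: "blackwell_optimal Q r \<pi>"
    unfolding \<pi>_def using ex_blackwell_optimal by (rule someI_ex)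
  hence pol: "is_policy \<pi>"
    unfolding blackwell_optimal_def by blast
  show "opt_gain Q r = (\<chi> s. opt_disc_value P r \<gamma> $ s0 / real n)"
    unfolding opt_gain_def \<pi>_def[symmetric] gain_anchored[OF pol] disc_value_blackwell_optimal[OF bw] ..
  obtain c where "bias Q r \<pi> = disc_value P r \<gamma> \<pi> - (\<chi> s. c)"
    by (rule bias_anchored[OF pol])
  thus "\<exists>c. opt_bias Q r = opt_disc_value P r \<gamma> - (\<chi> s. c)"
    unfolding opt_bias_def \<pi>_def[symmetric] disc_value_blackwell_optimal[OF bw] by blast
qed

section \<open>Near-optimality criteria\<close>

lemma anchored_action_value:
  "r s a + (\<Sum>s'\<in>UNIV. Q s a s' * w$s') = qvalue P r \<gamma> w s a + w$s0 / real n"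
  by (simp add: anchored_mean qvalue_def)

lemma opt_gap_sup_norm_le:
  assumes pol: "is_policy \<pi>" and gap: "\<And>s. opt_disc_value P r \<gamma> $ s - disc_value P r \<gamma> \<pi> $ s \<le> e"
  shows "sup_norm (opt_disc_value P r \<gamma> - disc_value P r \<gamma> \<pi>) \<le> e"
proof (rule sup_norm_le)
  fix s
  show "\<bar>(opt_disc_value P r \<gamma> - disc_value P r \<gamma> \<pi>) $ s\<bar> \<le> e"
    using gap[of s] disc_value_le_opt_disc_value[OF kernel pol gamma_nonneg gamma_less_1, of r s]
    by (simp add: abs_le_iff)
qed

lemma near_optimal_of_bellman_residual:
  assumes pol: "is_policy \<pi>"
    and residual: "\<forall>s. bellman Q r (bias Q r \<pi>) $ s \<le> bias Q r \<pi> $ s + gain Q r \<pi> $ s + 1 / real n ^ 2"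
  shows "sup_norm (opt_disc_value P r \<gamma> - disc_value P r \<gamma> \<pi>) \<le> 1 / real n"
proof -
  define W where "W = disc_value P r \<gamma> \<pi>"
  obtain c where bias: "bias Q r \<pi> = W - (\<chi> s. c)"
    unfolding W_def by (rule bias_anchored[OF pol])
  have W_residual: "qvalue P r \<gamma> W s a \<le> W$s + 1 / real n ^ 2" for s a
  proof -
    have "r s a + (\<Sum>s'\<in>UNIV. Q s a s' * (W - (\<chi> s. c))$s') \<le> bellman Q r (W - (\<chi> s. c)) $ s"
      unfolding bellman_def by (simp add: Max_ge)
    also have "\<dots> \<le> W$s - c + W$s0 / real n + 1 / real n ^ 2"
      using residual[rule_format, of s] unfolding bias gain_anchored[OF pol] W_def by simp
    finally show ?thesis
      using anchored_action_value[of r s a W] kernel_mean_minus_const[OF is_kernel_anchored, of s a W c]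
      by linarith
  qed
  obtain f where opt: "opt_disc_value P r \<gamma> = disc_value P r \<gamma> (det_policy f)"
    by (rule opt_disc_value_det_policy[OF kernel gamma_nonneg gamma_less_1])
  have "pol_bellman P r \<gamma> (det_policy f) W $ s \<le> W$s + 1 / real n ^ 2" for s
    unfolding pol_bellman_det_policy_nth by (rule W_residual)
  hence "opt_disc_value P r \<gamma> $ s - W$s \<le> (1 / real n ^ 2) / (1 - \<gamma>)" for s
    unfolding opt by (rule disc_value_le_of_supersolution[OF kernel is_policy_det_policy gamma_nonneg gamma_less_1])
  hence "opt_disc_value P r \<gamma> $ s - W$s \<le> 1 / real n" for s
    unfolding residual_over_one_minus_gamma .
  thus ?thesis
    unfolding W_def by (rule opt_gap_sup_norm_le[OF pol])
qed

lemma pol_bellman_ge_of_greedy: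
  assumes pol: "is_policy \<pi>" and greedy: "greedy \<pi> (\<lambda>s a. r s a + (\<Sum>s'\<in>UNIV. Q s a s' * h$s'))"
  shows "qvalue P r \<gamma> h s a \<le> pol_bellman P r \<gamma> \<pi> h $ s"
proof -
  have "qvalue P r \<gamma> h s a + h$s0 / real n \<le> Max (range (\<lambda>a. qvalue P r \<gamma> h s a + h$s0 / real n))"
    by (rule Max_ge) auto
  also have "\<dots> = (\<Sum>a\<in>UNIV. \<pi> s a * (qvalue P r \<gamma> h s a + h$s0 / real n))"
    using greedy[unfolded greedy_def anchored_action_value, rule_format, of s] by simp
  also have "\<dots> = pol_bellman P r \<gamma> \<pi> h $ s + (\<Sum>a\<in>UNIV. \<pi> s a) * (h$s0 / real n)"
    by (simp add: pol_bellman_nth distrib_left sum.distrib sum_distrib_right sum_divide_distrib)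
  also have "\<dots> = pol_bellman P r \<gamma> \<pi> h $ s + h$s0 / real n"
    using pol by (simp add: is_policy_def)
  finally show ?thesis
    by simp
qed

lemma near_optimal_of_greedy:
  assumes pol: "is_policy \<pi>"
    and greedy: "greedy \<pi> (\<lambda>s a. r s a + (\<Sum>s'\<in>UNIV. Q s a s' * h$s'))"
    and close: "sp_norm (opt_bias Q r - h) \<le> 1 / real n ^ 2"
  shows "sup_norm (opt_disc_value P r \<gamma> - disc_value P r \<gamma> \<pi>) \<le> 1 / real n"
proof -
  define V where "V = opt_disc_value P r \<gamma>"
  define e where "e = h - V"
  obtain c where bias: "opt_bias Q r = V - (\<chi> s. c)"
    using opt_bias_anchored unfolding V_def by blast
  have "e$t - e$u \<le> 1 / real n ^ 2" for t u
    using diff_le_sp_norm[of "opt_bias Q r - h" u t] close unfolding bias e_def by simp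
  hence "vmax e - vmin e \<le> 1 / real n ^ 2"
    by (metis vmax_attained vmin_attained)
  hence "\<gamma> * (vmax e - vmin e) \<le> \<gamma> * (1 / real n ^ 2)"
    using gamma_nonneg by (rule mult_left_mono)
  hence spread: "\<gamma> * vmax e - \<gamma> * vmin e \<le> \<gamma> / real n ^ 2"
    by (simp only: right_diff_distrib times_divide_eq_right mult_1_right)
  obtain f where opt: "V = disc_value P r \<gamma> (det_policy f)"
    unfolding V_def by (rule opt_disc_value_det_policy[OF kernel gamma_nonneg gamma_less_1])
  text \<open>\<open>V\<close> is almost a subsolution for \<open>\<pi>\<close>: the greedy choice for \<open>h\<close> loses at most the spread of \<open>h - V\<close>.\<close>
  have "V$s \<le> pol_bellman P r \<gamma> \<pi> V $ s + \<gamma> / real n ^ 2" for s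
  proof -
    have V_s: "V$s = qvalue P r \<gamma> V s (f s)"
      unfolding opt by (rule disc_value_det_policy_nth[OF kernel gamma_nonneg gamma_less_1])
    have q: "qvalue P r \<gamma> h s (f s) - qvalue P r \<gamma> V s (f s) = \<gamma> * (\<Sum>s'\<in>UNIV. P s (f s) s' * e$s')"
      unfolding e_def by (rule qvalue_diff)
    have "(pol_bellman P r \<gamma> \<pi> h - pol_bellman P r \<gamma> \<pi> V) $ s = \<gamma> * (pol_mat P \<pi> *v e) $ s"
      unfolding pol_bellman_diff e_def by simp
    hence b: "pol_bellman P r \<gamma> \<pi> h $ s - pol_bellman P r \<gamma> \<pi> V $ s = \<gamma> * (pol_mat P \<pi> *v e) $ s"
      by (simp only: vector_minus_component)
    have lo: "\<gamma> * vmin e \<le> \<gamma> * (\<Sum>s'\<in>UNIV. P s (f s) s' * e$s')"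
      using kernel_mean_ge[OF kernel vmin_le] gamma_nonneg by (rule mult_left_mono)
    have hi: "\<gamma> * (pol_mat P \<pi> *v e) $ s \<le> \<gamma> * vmax e"
      using pol_mat_mult_le[OF kernel pol vmax_ge] gamma_nonneg by (rule mult_left_mono)
    show ?thesis
      using V_s q b lo hi spread pol_bellman_ge_of_greedy[OF pol greedy, of s "f s"] by linarith
  qed
  hence "V$s - disc_value P r \<gamma> \<pi> $ s \<le> (\<gamma> / real n ^ 2) / (1 - \<gamma>)" for s
    by (rule disc_value_ge_of_subsolution[OF kernel pol gamma_nonneg gamma_less_1])
  hence "V$s - disc_value P r \<gamma> \<pi> $ s \<le> 1 / real n" for s
    using discounted_residual_le by (rule order_trans)
  thus ?thesis
    unfolding V_def by (rule opt_gap_sup_norm_le[OF pol])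
qed

lemma near_optimal_of_gain_bias_close:
  assumes pol: "is_policy \<pi>"
    and gain: "\<forall>s. gain Q r \<pi> $ s \<ge> opt_gain Q r $ s - 1 / (3 * real n ^ 2)"
    and bias: "sup_norm (bias Q r \<pi> - opt_bias Q r) \<le> 1 / (3 * real n ^ 2)"
  shows "sup_norm (opt_disc_value P r \<gamma> - disc_value P r \<gamma> \<pi>) \<le> 1 / real n"
proof -
  define \<epsilon> where "\<epsilon> = 1 / (3 * real n ^ 2)"
  define V where "V = opt_disc_value P r \<gamma>"
  define W where "W = disc_value P r \<gamma> \<pi>"
  obtain c where c: "bias Q r \<pi> = W - (\<chi> s. c)"
    unfolding W_def by (rule bias_anchored[OF pol])
  obtain c' where c': "opt_bias Q r = V - (\<chi> s. c')"
    using opt_bias_anchored unfolding V_def by blast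
  have "V$s0 / real n - W$s0 / real n \<le> \<epsilon>"
    using gain[rule_format, of s0] unfolding gain_anchored[OF pol] opt_gain_anchored \<epsilon>_def V_def W_def by simp
  hence s0_gap: "V$s0 - W$s0 \<le> real n * \<epsilon>"
    using n_ge_2 by (simp add: field_simps)
  have bias_gap: "\<bar>W$t - c - (V$t - c')\<bar> \<le> \<epsilon>" for t
    using abs_le_sup_norm[of "bias Q r \<pi> - opt_bias Q r" t] bias unfolding c c' \<epsilon>_def by simp
  have "V$s - W$s \<le> 2 * \<epsilon> + real n * \<epsilon>" for s
    using bias_gap[of s] bias_gap[of s0] s0_gap by (simp add: abs_le_iff)
  moreover have "2 * \<epsilon> + real n * \<epsilon> \<le> 1 / real n"
    unfolding \<epsilon>_def using n_ge_2 by (simp add: field_simps power2_eq_square)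
  ultimately have "V$s - W$s \<le> 1 / real n" for s
    by (meson order_trans)
  thus ?thesis
    unfolding V_def W_def by (rule opt_gap_sup_norm_le[OF pol])
qed

lemma gain_bias_close_of_near_optimal:
  assumes pol: "is_policy \<pi>"
    and near: "sup_norm (opt_disc_value P r \<gamma> - disc_value P r \<gamma> \<pi>) \<le> 1 / real n"
  shows "(\<forall>s. gain Q r \<pi> $ s \<ge> opt_gain Q r $ s - 1 / real n ^ 2)
    \<and> sp_norm (bias Q r \<pi> - opt_bias Q r) \<le> 2 / real n"
proof
  define V where "V = opt_disc_value P r \<gamma>"
  define W where "W = disc_value P r \<gamma> \<pi>"
  have gap: "\<bar>V$s - W$s\<bar> \<le> 1 / real n" for s
    using abs_le_sup_norm[of "V - W" s] near unfolding V_def W_def by simp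
  have "(V$s0 - W$s0) / real n \<le> (1 / real n) / real n"
    using gap[of s0] n_ge_2 by (intro divide_right_mono) auto
  hence "V$s0 / real n - W$s0 / real n \<le> 1 / real n ^ 2"
    by (simp add: diff_divide_distrib power2_eq_square)
  thus "\<forall>s. gain Q r \<pi> $ s \<ge> opt_gain Q r $ s - 1 / real n ^ 2"
    unfolding gain_anchored[OF pol] opt_gain_anchored V_def W_def by simp
  obtain c where c: "bias Q r \<pi> = W - (\<chi> s. c)"
    unfolding W_def by (rule bias_anchored[OF pol])
  obtain c' where c': "opt_bias Q r = V - (\<chi> s. c')"
    using opt_bias_anchored unfolding V_def by blast
  show "sp_norm (bias Q r \<pi> - opt_bias Q r) \<le> 2 / real n"
  proof (rule sp_norm_le)
    fix s t
    show "(bias Q r \<pi> - opt_bias Q r) $ s - (bias Q r \<pi> - opt_bias Q r) $ t \<le> 2 / real n"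
      using gap[of s] gap[of t] unfolding c c' by (simp add: abs_le_iff)
  qed
qed

end

theorem mainTheorem19:
  fixes P :: "'s::finite \<Rightarrow> 'a::finite \<Rightarrow> 's \<Rightarrow> real"
    and r :: "'s \<Rightarrow> 'a \<Rightarrow> real"
    and n :: nat and s0 :: 's
    and \<pi> :: "'s \<Rightarrow> 'a \<Rightarrow> real"
  assumes kernel: "is_kernel P"
    and rew: "\<forall>s a. 0 \<le> r s a \<and> r s a \<le> 1"
    and n2: "n \<ge> 2"
    and pol: "is_policy \<pi>"
  shows "(((\<exists>h. greedy \<pi> (\<lambda>s a. r s a + (\<Sum>s'\<in>UNIV. anchored n s0 P s a s' * h $ s'))
                \<and> sp_norm (opt_bias (anchored n s0 P) r - h) \<le> 1 / real n ^ 2)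
          \<or> (\<forall>s. bellman (anchored n s0 P) r (bias (anchored n s0 P) r \<pi>) $ s
                 \<le> bias (anchored n s0 P) r \<pi> $ s + gain (anchored n s0 P) r \<pi> $ s + 1 / real n ^ 2)
          \<or> ((\<forall>s. gain (anchored n s0 P) r \<pi> $ s \<ge> opt_gain (anchored n s0 P) r $ s - 1 / (3 * real n ^ 2))
             \<and> sup_norm (bias (anchored n s0 P) r \<pi> - opt_bias (anchored n s0 P) r) \<le> 1 / (3 * real n ^ 2)))
         \<longrightarrow> sup_norm (opt_disc_value P r (1 - 1 / real n) - disc_value P r (1 - 1 / real n) \<pi>) \<le> 1 / real n)
       \<and> (sup_norm (opt_disc_value P r (1 - 1 / real n) - disc_value P r (1 - 1 / real n) \<pi>) \<le> 1 / real n
          \<longrightarrow> (\<forall>s. gain (anchored n s0 P) r \<pi> $ s \<ge> opt_gain (anchored n s0 P) r $ s - 1 / real n ^ 2)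
              \<and> sp_norm (bias (anchored n s0 P) r \<pi> - opt_bias (anchored n s0 P) r) \<le> 2 / real n)"
proof -
  interpret anchored_mdp P n s0
    using kernel n2 by unfold_locales
  show ?thesis
    using near_optimal_of_greedy[OF pol] near_optimal_of_bellman_residual[OF pol]
      near_optimal_of_gain_bias_close[OF pol] gain_bias_close_of_near_optimal[OF pol]
    by blast
qed

end
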